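(* Let $n\in\mathbb{N}$ and let $E$ be a normed space over $\mathbb{K}\in\{\mathbb{R},\mathbb{C}\}$ of infinite (algebraic) dimension $\lambda$. Then each of the following sets is $2^\lambda$-lineable: (i) the set of unbounded $n$-linear forms $E^n\to\mathbb{K}$; (ii) the set of unbounded symmetric $n$-linear forms $E^n\to\mathbb{K}$; (iii) the set of unbounded $n$-homogeneous polynomials $E\to\mathbb{K}$; (iv) the set of unbounded polynomials $E\to\mathbb{K}$ of degree at most $n$.
   Context: "Unbounded" means not bounded on the closed unit ball of $E$ (for an $n$-linear form $L$: $\sup\{|L(x_1,\ldots,x_n)|:\|x_i\|\le1\}=\infty$). A map $P:E\to\mathbb{K}$ is an $n$-homogeneous polynomial if $P(x)=L(x,\ldots,x)$ for some symmetric $n$-linear (not necessarily continuous) $L:E^n\to\mathbb{K}$; a polynomial of degree at most $n$ is a sum $P_0+P_1+\cdots+P_n$ with $P_0$ constant and $P_k$ $k$-homogeneous. For a cardinal $\mu$, a set $M$ of functions is $\mu$-lineable if $M\cup\{0\}$ contains a vector space of dimension $\mu$. *)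

theory Defs
  imports "HOL-Analysis.Analysis" "HOL-Library.Equipollence" "HOL-Library.Function_Algebras"
begin

text \<open>The carrier
  type 'a carries its real normed structure; sc is the 'k-scalar multiplication,
  compatible with the real one and with the norm.\<close>
definition normed_space_over :: "('k::real_normed_field \<Rightarrow> 'a::real_normed_vector \<Rightarrow> 'a) \<Rightarrow> bool" where
  "normed_space_over sc \<longleftrightarrow> Vector_Spaces.vector_space sc
     \<and> (\<forall>c x. norm (sc c x) = norm c * norm x)
     \<and> (\<forall>r x. sc (of_real r) x = r *\<^sub>R x)"

definition hamel_basis :: "('k::field \<Rightarrow> 'a::ab_group_add \<Rightarrow> 'a) \<Rightarrow> 'a set \<Rightarrow> bool" where
  "hamel_basis sc B \<longleftrightarrow> \<not> module.dependent sc B \<and> module.span sc B = UNIV"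

text \<open>Maps E^n \<rightarrow> 'k are represented as maps (nat \<Rightarrow> 'a) \<Rightarrow> 'k depending only on the
  first n coordinates.\<close>
definition multilinear_form :: "('k::field \<Rightarrow> 'a::ab_group_add \<Rightarrow> 'a) \<Rightarrow> nat \<Rightarrow> ((nat \<Rightarrow> 'a) \<Rightarrow> 'k) \<Rightarrow> bool" where
  "multilinear_form sc n L \<longleftrightarrow>
     (\<forall>x y. (\<forall>i<n. x i = y i) \<longrightarrow> L x = L y)
     \<and> (\<forall>i<n. \<forall>x. Vector_Spaces.linear sc (*) (\<lambda>v. L (x(i := v))))"

definition symmetric_form :: "nat \<Rightarrow> ((nat \<Rightarrow> 'a) \<Rightarrow> 'k) \<Rightarrow> bool" where
  "symmetric_form n L \<longleftrightarrow> (\<forall>x \<sigma>. \<sigma> permutes {..<n} \<longrightarrow> L (x \<circ> \<sigma>) = L x)"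

definition unbounded_form :: "nat \<Rightarrow> ((nat \<Rightarrow> 'a::real_normed_vector) \<Rightarrow> 'k::real_normed_field) \<Rightarrow> bool" where
  "unbounded_form n L \<longleftrightarrow> \<not> (\<exists>C. \<forall>x. (\<forall>i<n. norm (x i) \<le> 1) \<longrightarrow> norm (L x) \<le> C)"

definition unbounded_fun :: "('a::real_normed_vector \<Rightarrow> 'k::real_normed_field) \<Rightarrow> bool" where
  "unbounded_fun P \<longleftrightarrow> \<not> (\<exists>C. \<forall>x. norm x \<le> 1 \<longrightarrow> norm (P x) \<le> C)"

definition homogeneous_poly :: "('k::field \<Rightarrow> 'a::ab_group_add \<Rightarrow> 'a) \<Rightarrow> nat \<Rightarrow> ('a \<Rightarrow> 'k) \<Rightarrow> bool" where
  "homogeneous_poly sc n P \<longleftrightarrow>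
     (\<exists>L. multilinear_form sc n L \<and> symmetric_form n L \<and> P = (\<lambda>x. L (\<lambda>_. x)))"

definition poly_deg_le :: "('k::field \<Rightarrow> 'a::ab_group_add \<Rightarrow> 'a) \<Rightarrow> nat \<Rightarrow> ('a \<Rightarrow> 'k) \<Rightarrow> bool" where
  "poly_deg_le sc n P \<longleftrightarrow>
     (\<exists>Ps. (\<forall>k\<le>n. homogeneous_poly sc k (Ps k)) \<and> P = (\<lambda>x. \<Sum>k\<le>n. Ps k x))"

text \<open>mu-lineability (mu given as the cardinality of a set I) of a set M of 'k-valued
  functions: M \<union> {0} contains a 'k-vector space of dimension |I|, i.e. the span of a
  linearly independent family F with F equipotent to I.\<close>
definition lineable_card :: "'i set \<Rightarrow> ('d \<Rightarrow> 'k::field) set \<Rightarrow> bool" where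
  "lineable_card I M \<longleftrightarrow>
     (\<exists>F. F \<approx> I \<and> \<not> module.dependent (\<lambda>c f x. c * f x) F
          \<and> module.span (\<lambda>c f x. c * f x) F \<subseteq> M \<union> {0})"

definition thm33_concl :: "('k::real_normed_field \<Rightarrow> 'a::real_normed_vector \<Rightarrow> 'a) \<Rightarrow> nat \<Rightarrow> 'a set \<Rightarrow> bool" where
  "thm33_concl sc n B \<longleftrightarrow>
     lineable_card (Pow B) {L :: (nat \<Rightarrow> 'a) \<Rightarrow> 'k. multilinear_form sc n L \<and> unbounded_form n L}
   \<and> lineable_card (Pow B) {L :: (nat \<Rightarrow> 'a) \<Rightarrow> 'k. multilinear_form sc n L \<and> symmetric_form n L \<and> unbounded_form n L}
   \<and> lineable_card (Pow B) {P :: 'a \<Rightarrow> 'k. homogeneous_poly sc n P \<and> unbounded_fun P}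
   \<and> lineable_card (Pow B) {P :: 'a \<Rightarrow> 'k. poly_deg_le sc n P \<and> unbounded_fun P}"

end

theory Submission
  imports Defs
begin

(*
  Index the family by the subsets S of the Hamel basis B; Pow B has cardinality 2^\<lambda>.
  As |lists B \<times> lists B \<times> \<nat>| = |B|, there are distinct basis vectors b(xs, ys, k), and f_S is
  the linear functional with f_S(b(xs, ys, k)) = k \<parallel>b(xs, ys, k)\<parallel> if filtering xs by S yields ys,
  and f_S = 0 elsewhere on B.  Finitely many distinct subsets are told apart by a single list xs,
  so a combination \<Sigma> c_S f_S with c_S\<^sub>0 \<noteq> 0 takes the value c_S\<^sub>0 k at the unit vector in the
  direction of b(xs, filter S\<^sub>0 xs, k): it is unbounded on the unit ball.
  Symmetrizing with the functional u that equals \<parallel>b\<parallel> on B, L_F(x) = \<Sigma>_l F(x_l) \<Pi>_{j \<noteq> l} u(x_j)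
  is linear in F and gives symmetric n-linear forms with L_F(e, ..., e) = n F(e) whenever u(e) = 1,
  so these forms and their diagonals, the n-homogeneous polynomials, stay unbounded.
*)

unbundle cardinal_syntax

lemma lepoll_iff_card_of_ordLeq: "A \<lesssim> B \<longleftrightarrow> |A| \<le>o |B|"
  by (simp add: lepoll_def card_of_ordLeq)

lemma infinite_Times_lepoll:
  assumes "infinite A" "X \<lesssim> A" "Y \<lesssim> A"
  shows "X \<times> Y \<lesssim> A"
  using assms card_of_Sigma_ordLeq_infinite[of A X "\<lambda>_. Y"] by (simp add: lepoll_iff_card_of_ordLeq)

lemma infinite_lists_lepoll:
  assumes inf: "infinite A"
  shows "lists A \<lesssim> A"
proof -
  have level: "{xs \<in> lists A. length xs = k} \<lesssim> A" for k
  proof (induction k)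
    case 0
    have "{xs \<in> lists A. length xs = 0} = {[]}" by auto
    moreover obtain a where "a \<in> A" using inf by (metis finite.emptyI ex_in_conv)
    moreover have "{[]} \<lesssim> {a}" by (simp add: eqpoll_imp_lepoll singleton_eqpoll)
    moreover have "{a} \<lesssim> A" using \<open>a \<in> A\<close> by (simp add: subset_imp_lepoll)
    ultimately show ?case by (metis lepoll_trans)
  next
    case (Suc k)
    have "{xs \<in> lists A. length xs = Suc k} = (\<lambda>(a, xs). a # xs) ` (A \<times> {xs \<in> lists A. length xs = k})"
      by (auto simp: length_Suc_conv)
    also have "\<dots> \<lesssim> A \<times> {xs \<in> lists A. length xs = k}" by (rule image_lepoll)
    also have "\<dots> \<lesssim> A" by (rule infinite_Times_lepoll[OF inf lepoll_refl Suc])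
    finally show ?case .
  qed
  have "lists A = (\<Union>k. {xs \<in> lists A. length xs = k})" by auto
  moreover have "|\<Union>k. {xs \<in> lists A. length xs = k}| \<le>o |A|"
    using inf level
    by (intro card_of_UNION_ordLeq_infinite) (auto simp: lepoll_iff_card_of_ordLeq infinite_iff_card_of_nat)
  ultimately show ?thesis by (simp add: lepoll_iff_card_of_ordLeq)
qed

lemma separating_list:
  assumes "finite t" "t \<subseteq> Pow B" "S \<in> t"
  shows "\<exists>xs\<in>lists B. \<forall>T\<in>t. [x\<leftarrow>xs. x \<in> T] = [x\<leftarrow>xs. x \<in> S] \<longrightarrow> T = S"
proof -
  have "\<exists>p. p \<in> B \<and> (p \<in> T \<longleftrightarrow> p \<notin> S)" if "T \<in> t - {S}" for T
  proof -
    have "T \<noteq> S" "T \<subseteq> B" "S \<subseteq> B" using that assms by auto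
    then show ?thesis by blast
  qed
  then obtain p where p: "\<And>T. T \<in> t - {S} \<Longrightarrow> p T \<in> B \<and> (p T \<in> T \<longleftrightarrow> p T \<notin> S)"
    by metis
  obtain xs where xs: "set xs = p ` (t - {S})"
    using finite_list[of "p ` (t - {S})"] assms(1) by auto
  have "[x\<leftarrow>xs. x \<in> T] \<noteq> [x\<leftarrow>xs. x \<in> S]" if T: "T \<in> t - {S}" for T
  proof
    assume "[x\<leftarrow>xs. x \<in> T] = [x\<leftarrow>xs. x \<in> S]"
    then have "p T \<in> set [x\<leftarrow>xs. x \<in> T] \<longleftrightarrow> p T \<in> set [x\<leftarrow>xs. x \<in> S]" by simp
    then show False using p[OF T] xs T by auto
  qed
  moreover have "xs \<in> lists B" using xs p by (auto simp: lists_eq_set)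
  ultimately show ?thesis by blast
qed

lemma separating_data_lepoll:
  assumes "infinite B"
  shows "(lists B \<times> lists B) \<times> (UNIV :: nat set) \<lesssim> B"
  using assms by (intro infinite_Times_lepoll infinite_lists_lepoll)
    (simp_all add: infinite_le_lepoll[symmetric])

lemma vector_space_field: "Vector_Spaces.vector_space ((*) :: 'k::field \<Rightarrow> 'k \<Rightarrow> 'k)"
  by unfold_locales (auto simp: algebra_simps)

lemma prod_fun_upd:
  assumes "finite J" "i \<in> J"
  shows "(\<Prod>j\<in>J. h j ((x(i := v)) j)) = h i v * (\<Prod>j\<in>J-{i}. h j (x j))"
  using assms by (auto simp: prod.remove intro!: prod.cong)

definition symmetrized_form :: "('a \<Rightarrow> 'k::comm_ring_1) \<Rightarrow> nat \<Rightarrow> ('a \<Rightarrow> 'k) \<Rightarrow> (nat \<Rightarrow> 'a) \<Rightarrow> 'k" where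
  "symmetrized_form u n F x = (\<Sum>l<n. \<Prod>j<n. (if j = l then F else u) (x j))"

lemma symmetrized_form_eq:
  "symmetrized_form u n F x = (\<Sum>l<n. F (x l) * (\<Prod>j\<in>{..<n}-{l}. u (x j)))"
  unfolding symmetrized_form_def by (auto simp: prod.remove intro!: sum.cong prod.cong)

lemma symmetrized_form_diagonal: "u e = 1 \<Longrightarrow> symmetrized_form u n F (\<lambda>_. e) = of_nat n * F e"
  by (simp add: symmetrized_form_eq)

lemma sum_symmetrized_form:
  "(\<Sum>S\<in>t. c S * symmetrized_form u n (f S) x) = symmetrized_form u n (\<lambda>v. \<Sum>S\<in>t. c S * f S v) x"
  unfolding symmetrized_form_eq
  by (simp add: sum_distrib_left sum_distrib_right mult.assoc sum.swap[of _ t])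

lemma symmetric_form_symmetrized_form: "symmetric_form n (symmetrized_form u n F)"
  unfolding symmetric_form_def
proof (intro allI impI)
  fix x :: "nat \<Rightarrow> 'a" and \<sigma> assume \<sigma>: "\<sigma> permutes {..<n}"
  define G where "G l = (\<Prod>j<n. (if j = l then F else u) (x j))" for l
  have "(\<Prod>j<n. (if j = l then F else u) ((x \<circ> \<sigma>) j)) = G (\<sigma> l)" for l
  proof -
    have "G (\<sigma> l) = (\<Prod>j<n. (if \<sigma> j = \<sigma> l then F else u) (x (\<sigma> j)))"
      unfolding G_def by (subst prod.permute[OF \<sigma>]) (simp add: comp_def)
    also have "\<dots> = (\<Prod>j<n. (if j = l then F else u) ((x \<circ> \<sigma>) j))"
      using permutes_inj[OF \<sigma>] by (intro prod.cong) (auto dest: injD)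
    finally show ?thesis by simp
  qed
  then have "symmetrized_form u n F (x \<circ> \<sigma>) = (\<Sum>l<n. G (\<sigma> l))"
    unfolding symmetrized_form_def by simp
  also have "\<dots> = symmetrized_form u n F x"
    using sum.permute[OF \<sigma>, of G] by (simp add: comp_def symmetrized_form_def G_def)
  finally show "symmetrized_form u n F (x \<circ> \<sigma>) = symmetrized_form u n F x" .
qed

context
  fixes sc :: "'k::field \<Rightarrow> 'a::ab_group_add \<Rightarrow> 'a"
  assumes vs: "Vector_Spaces.vector_space sc"
begin

interpretation vector_space_pair sc "(*) :: 'k \<Rightarrow> 'k \<Rightarrow> 'k"
  using vs vector_space_field by (simp add: vector_space_pair_def)

lemma exists_linear_extension:
  assumes "\<not> module.dependent sc B"
  shows "\<exists>F. Vector_Spaces.linear sc (*) F \<and> (\<forall>b\<in>B. F b = g b)"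
  using assms linear_construct construct_basis by blast

lemma linear_combination_linear:
  assumes "\<And>S. S \<in> t \<Longrightarrow> Vector_Spaces.linear sc (*) (f S)"
  shows "Vector_Spaces.linear sc (*) (\<lambda>v. \<Sum>S\<in>t. c S * f S v)"
  using assms by (intro linear_compose_sum ballI linear_compose_scale_right) auto

lemma multilinear_form_symmetrized_form:
  assumes "Vector_Spaces.linear sc (*) u" "Vector_Spaces.linear sc (*) F"
  shows "multilinear_form sc n (symmetrized_form u n F)"
  unfolding multilinear_form_def
proof (intro conjI allI impI)
  fix x y :: "nat \<Rightarrow> 'a" assume "\<forall>i<n. x i = y i"
  then show "symmetrized_form u n F x = symmetrized_form u n F y"
    unfolding symmetrized_form_def by (intro sum.cong prod.cong) auto
next
  fix i x assume i: "i < n"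
  have "symmetrized_form u n F (x(i := v)) =
      (\<Sum>l<n. (\<Prod>j\<in>{..<n}-{i}. (if j = l then F else u) (x j)) * (if i = l then F else u) v)" for v
    unfolding symmetrized_form_def
    using prod_fun_upd[of "{..<n}" i "\<lambda>j. if j = _ then F else u"] i
    by (intro sum.cong) (simp_all add: mult.commute)
  then show "Vector_Spaces.linear sc (*) (\<lambda>v. symmetrized_form u n F (x(i := v)))"
    using assms by (simp add: linear_combination_linear)
qed

end

lemma sum_apply_fun: "(\<Sum>a\<in>t. h a) x = (\<Sum>a\<in>t. h a x)"
  by (induction t rule: infinite_finite_induct) auto

lemma module_pointwise_scale: "module (\<lambda>c (f :: 'd \<Rightarrow> 'k::field) x. c * f x)"
  by unfold_locales (auto simp: fun_eq_iff algebra_simps)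

lemma lineable_card_mono: "lineable_card I M \<Longrightarrow> M \<subseteq> M' \<Longrightarrow> lineable_card I M'"
  unfolding lineable_card_def by blast

lemma lineable_cardI:
  fixes \<Phi> :: "'i \<Rightarrow> 'd \<Rightarrow> 'k::field"
  assumes nontrivial: "\<And>t c. finite t \<Longrightarrow> t \<subseteq> I \<Longrightarrow> \<exists>S\<in>t. c S \<noteq> 0 \<Longrightarrow>
      (\<lambda>x. \<Sum>S\<in>t. c S * \<Phi> S x) \<in> M - {0}"
  shows "lineable_card I M"
proof -
  let ?sc = "\<lambda>c (f :: 'd \<Rightarrow> 'k) x. c * f x"
  have "inj_on \<Phi> I"
  proof (rule inj_onI, rule ccontr)
    fix S T assume "S \<in> I" "T \<in> I" "\<Phi> S = \<Phi> T" "S \<noteq> T"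
    then show False
      using nontrivial[of "{S, T}" "\<lambda>X. if X = S then 1 else -1"] by (auto simp: fun_eq_iff)
  qed
  then have combination:
    "\<exists>t. finite t \<and> t \<subseteq> I \<and> t' = \<Phi> ` t \<and> (\<Sum>v\<in>t'. ?sc (r v) v) = (\<lambda>x. \<Sum>S\<in>t. r (\<Phi> S) * \<Phi> S x)"
    if t': "finite t'" "t' \<subseteq> \<Phi> ` I" for t' r
  proof -
    obtain t where t: "t \<subseteq> I" "finite t" "t' = \<Phi> ` t"
      using finite_subset_image[OF t'] by blast
    have "inj_on \<Phi> t" using \<open>inj_on \<Phi> I\<close> t(1) by (rule inj_on_subset)
    then show ?thesis
      using t by (intro exI[of _ t]) (auto simp: fun_eq_iff sum_apply_fun sum.reindex)
  qed
  have "\<not> module.dependent ?sc (\<Phi> ` I)"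
  proof
    assume "module.dependent ?sc (\<Phi> ` I)"
    then obtain t' r where t': "finite t'" "t' \<subseteq> \<Phi> ` I" "(\<Sum>v\<in>t'. ?sc (r v) v) = 0" "\<exists>v\<in>t'. r v \<noteq> 0"
      unfolding module.dependent_explicit[OF module_pointwise_scale] by blast
    moreover obtain t where "finite t" "t \<subseteq> I" "t' = \<Phi> ` t"
      "(\<Sum>v\<in>t'. ?sc (r v) v) = (\<lambda>x. \<Sum>S\<in>t. r (\<Phi> S) * \<Phi> S x)"
      using combination[OF t'(1,2)] by blast
    ultimately show False using nontrivial[of t "\<lambda>S. r (\<Phi> S)"] by auto
  qed
  moreover have "module.span ?sc (\<Phi> ` I) \<subseteq> M \<union> {0}"
  proof
    fix y assume "y \<in> module.span ?sc (\<Phi> ` I)"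
    then obtain t' r where t': "finite t'" "t' \<subseteq> \<Phi> ` I" "y = (\<Sum>v\<in>t'. ?sc (r v) v)"
      unfolding module.span_explicit[OF module_pointwise_scale] by blast
    moreover obtain t where "finite t" "t \<subseteq> I" "t' = \<Phi> ` t"
      "(\<Sum>v\<in>t'. ?sc (r v) v) = (\<lambda>x. \<Sum>S\<in>t. r (\<Phi> S) * \<Phi> S x)"
      using combination[OF t'(1,2)] by blast
    ultimately show "y \<in> M \<union> {0}"
      using nontrivial[of t "\<lambda>S. r (\<Phi> S)"] by (cases "\<exists>S\<in>t. r (\<Phi> S) \<noteq> 0") (auto simp: zero_fun_def)
  qed
  moreover have "\<Phi> ` I \<approx> I"
    using \<open>inj_on \<Phi> I\<close> by (rule inj_on_image_eqpoll_self)
  ultimately show ?thesis unfolding lineable_card_def by blast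
qed

lemma linear_at_normalized:
  fixes sc :: "'k::real_normed_field \<Rightarrow> 'a::real_normed_vector \<Rightarrow> 'a"
  assumes "Vector_Spaces.linear sc (*) F" "b \<noteq> 0" "F b = of_real (norm b) * y"
  shows "F (sc (of_real (1 / norm b)) b) = y"
  using assms by (simp add: Vector_Spaces.linear_iff of_real_def field_simps)

definition unbounded_combinations :: "('a::real_normed_vector \<Rightarrow> 'k::real_normed_field) \<Rightarrow> ('i \<Rightarrow> 'a \<Rightarrow> 'k) \<Rightarrow> 'i set \<Rightarrow> bool" where
  "unbounded_combinations u f I \<longleftrightarrow>
     (\<forall>t c S C. finite t \<and> t \<subseteq> I \<and> S \<in> t \<and> c S \<noteq> 0 \<longrightarrow>
        (\<exists>e. norm e \<le> 1 \<and> u e = 1 \<and> C < norm (\<Sum>T\<in>t. c T * f T e)))"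

lemma exists_unbounded_combinations:
  fixes sc :: "'k::real_normed_field \<Rightarrow> 'a::real_normed_vector \<Rightarrow> 'a"
  assumes ns: "normed_space_over sc" and indep: "\<not> module.dependent sc B" and inf: "infinite B"
  shows "\<exists>u f. Vector_Spaces.linear sc (*) u \<and> (\<forall>S. Vector_Spaces.linear sc (*) (f S))
    \<and> unbounded_combinations u f (Pow B)"
proof -
  let ?X = "(lists B \<times> lists B) \<times> (UNIV :: nat set)"
  have vs: "Vector_Spaces.vector_space sc" and norm_sc: "\<And>c x. norm (sc c x) = norm c * norm x"
    using ns by (simp_all add: normed_space_over_def)
  obtain \<iota> where \<iota>: "inj_on \<iota> ?X" "\<iota> ` ?X \<subseteq> B"
    using separating_data_lepoll[OF inf] unfolding lepoll_def by blast
  define w :: "'a set \<Rightarrow> 'a \<Rightarrow> 'k" where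
    "w S b = (case inv_into ?X \<iota> b of ((xs, ys), k) \<Rightarrow> if [x\<leftarrow>xs. x \<in> S] = ys then of_nat k else 0)"
    for S b
  have "\<forall>S. \<exists>F. Vector_Spaces.linear sc (*) F \<and> (\<forall>b\<in>B. F b = of_real (norm b) * w S b)"
    by (intro allI exists_linear_extension[OF vs indep])
  then obtain f where f: "\<And>S. Vector_Spaces.linear sc (*) (f S)"
    and f_basis: "\<And>S b. b \<in> B \<Longrightarrow> f S b = of_real (norm b) * w S b"
    by metis
  obtain u where u: "Vector_Spaces.linear sc (*) u" and u_basis: "\<And>b. b \<in> B \<Longrightarrow> u b = of_real (norm b)"
    using exists_linear_extension[OF vs indep, of "\<lambda>b. of_real (norm b)"] by blast
  have "unbounded_combinations u f (Pow B)"
    unfolding unbounded_combinations_def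
  proof (intro allI impI, elim conjE)
    fix t and c :: "'a set \<Rightarrow> 'k" and S and C :: real
    assume t: "finite t" "t \<subseteq> Pow B" and S: "S \<in> t" "c S \<noteq> 0"
    obtain xs where xs: "xs \<in> lists B" and sep: "\<And>T. T \<in> t \<Longrightarrow> [x\<leftarrow>xs. x \<in> T] = [x\<leftarrow>xs. x \<in> S] \<longleftrightarrow> T = S"
      using separating_list[OF t S(1)] by blast
    obtain k :: nat where k: "C / norm (c S) < real k"
      using reals_Archimedean2 by blast
    define b where "b = \<iota> ((xs, [x\<leftarrow>xs. x \<in> S]), k)"
    have X: "((xs, [x\<leftarrow>xs. x \<in> S]), k) \<in> ?X" using xs by auto
    then have "b \<in> B" using \<iota>(2) by (auto simp: b_def)
    then have "b \<noteq> 0"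
      using indep vs module.dependent_zero module_iff_vector_space by metis
    define e where "e = sc (of_real (1 / norm b)) b"
    have "norm e = 1" using \<open>b \<noteq> 0\<close> by (simp add: e_def norm_sc norm_divide)
    have "u e = 1"
      unfolding e_def by (rule linear_at_normalized[OF u \<open>b \<noteq> 0\<close>]) (simp add: u_basis \<open>b \<in> B\<close>)
    have "f T e = (if T = S then of_nat k else 0)" if "T \<in> t" for T
    proof -
      have "f T e = w T b"
        unfolding e_def by (rule linear_at_normalized[OF f \<open>b \<noteq> 0\<close>]) (simp add: f_basis \<open>b \<in> B\<close>)
      also have "\<dots> = (if T = S then of_nat k else 0)"
        using inv_into_f_f[OF \<iota>(1) X] sep[OF that] by (simp add: w_def b_def)
      finally show ?thesis .
    qed
    then have "(\<Sum>T\<in>t. c T * f T e) = c S * of_nat k"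
      using t(1) S(1) by (simp add: if_distrib[of "(*) _"] sum.delta cong: if_cong)
    moreover have "C < norm (c S) * real k"
      using k S(2) by (simp add: field_simps)
    ultimately show "\<exists>e. norm e \<le> 1 \<and> u e = 1 \<and> C < norm (\<Sum>T\<in>t. c T * f T e)"
      using \<open>norm e = 1\<close> \<open>u e = 1\<close> by (intro exI[of _ e]) (simp add: norm_mult)
  qed
  then show ?thesis using u f by blast
qed

lemma unbounded_fun_nonzero: "unbounded_fun P \<Longrightarrow> P \<noteq> 0"
  unfolding unbounded_fun_def by (auto simp: zero_fun_def)

lemma unbounded_form_nonzero: "unbounded_form n L \<Longrightarrow> L \<noteq> 0"
  unfolding unbounded_form_def by (auto simp: zero_fun_def)

lemma unbounded_form_if_unbounded_diagonal:
  "unbounded_fun (\<lambda>x. L (\<lambda>_. x)) \<Longrightarrow> unbounded_form n L"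
  unfolding unbounded_fun_def unbounded_form_def by (metis order.refl)

lemma unbounded_symmetrized_combination:
  assumes "unbounded_combinations u f I" "n \<ge> 1" "finite t" "t \<subseteq> I" "\<exists>S\<in>t. c S \<noteq> 0"
  shows "unbounded_fun (\<lambda>x. symmetrized_form u n (\<lambda>v. \<Sum>S\<in>t. c S * f S v) (\<lambda>_. x))"
  unfolding unbounded_fun_def
proof
  assume "\<exists>C. \<forall>x. norm x \<le> 1 \<longrightarrow> norm (symmetrized_form u n (\<lambda>v. \<Sum>S\<in>t. c S * f S v) (\<lambda>_. x)) \<le> C"
  then obtain C where C: "\<And>x. norm x \<le> 1 \<Longrightarrow> norm (symmetrized_form u n (\<lambda>v. \<Sum>S\<in>t. c S * f S v) (\<lambda>_. x)) \<le> C"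
    by blast
  obtain e where e: "norm e \<le> 1" "u e = 1" "C < norm (\<Sum>S\<in>t. c S * f S e)"
    using assms unfolding unbounded_combinations_def by blast
  have "norm (\<Sum>S\<in>t. c S * f S e) \<le> real n * norm (\<Sum>S\<in>t. c S * f S e)"
    using assms(2) by (simp add: mult_le_cancel_right1)
  then show False
    using C[OF e(1)] e(3) by (simp add: symmetrized_form_diagonal[of u e, OF e(2)] norm_mult)
qed

lemma homogeneous_poly_imp_poly_deg_le:
  fixes sc :: "'k::field \<Rightarrow> 'a::ab_group_add \<Rightarrow> 'a"
  assumes "Vector_Spaces.vector_space sc" "homogeneous_poly sc n P"
  shows "poly_deg_le sc n P"
proof -
  have "multilinear_form sc k (\<lambda>_. 0 :: 'k)" for k
    using assms(1) vector_space_field unfolding multilinear_form_def Vector_Spaces.linear_iff by auto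
  then have "homogeneous_poly sc k (\<lambda>_. 0)" for k
    unfolding homogeneous_poly_def symmetric_form_def by auto
  moreover have "P x = (\<Sum>k\<le>n. (if k = n then P else (\<lambda>_. 0)) x)" for x
    by (simp add: if_distrib[of "\<lambda>g. g x"] cong: if_cong)
  ultimately show ?thesis
    unfolding poly_deg_le_def using assms(2)
    by (intro exI[of _ "\<lambda>k. if k = n then P else (\<lambda>_. 0)"]) auto
qed

lemma nontrivial_symmetrized_combination:
  fixes sc :: "'k::real_normed_field \<Rightarrow> 'a::real_normed_vector \<Rightarrow> 'a"
  assumes vs: "Vector_Spaces.vector_space sc"
    and u: "Vector_Spaces.linear sc (*) u" and f: "\<And>S. Vector_Spaces.linear sc (*) (f S)"
    and unbounded: "unbounded_combinations u f I" and n: "n \<ge> 1"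
    and t: "finite t" "t \<subseteq> I" "\<exists>S\<in>t. c S \<noteq> 0"
  shows "(\<lambda>x. \<Sum>S\<in>t. c S * symmetrized_form u n (f S) x)
      \<in> {L. multilinear_form sc n L \<and> symmetric_form n L \<and> unbounded_form n L} - {0}"
    and "(\<lambda>x. \<Sum>S\<in>t. c S * symmetrized_form u n (f S) (\<lambda>_. x))
      \<in> {P. homogeneous_poly sc n P \<and> poly_deg_le sc n P \<and> unbounded_fun P} - {0}"
proof -
  define L where "L = symmetrized_form u n (\<lambda>v. \<Sum>S\<in>t. c S * f S v)"
  have combination: "(\<lambda>x. \<Sum>S\<in>t. c S * symmetrized_form u n (f S) x) = L"
    by (simp add: L_def sum_symmetrized_form)
  have unbounded_diagonal: "unbounded_fun (\<lambda>x. L (\<lambda>_. x))"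
    unfolding L_def by (rule unbounded_symmetrized_combination[OF unbounded n t])
  then have "unbounded_form n L"
    by (rule unbounded_form_if_unbounded_diagonal)
  moreover have "multilinear_form sc n L" "symmetric_form n L"
    unfolding L_def using u f
    by (simp_all add: multilinear_form_symmetrized_form[OF vs] linear_combination_linear[OF vs]
        symmetric_form_symmetrized_form)
  ultimately show "(\<lambda>x. \<Sum>S\<in>t. c S * symmetrized_form u n (f S) x)
      \<in> {L. multilinear_form sc n L \<and> symmetric_form n L \<and> unbounded_form n L} - {0}"
    using unbounded_form_nonzero[OF \<open>unbounded_form n L\<close>] by (simp add: combination)
  have "homogeneous_poly sc n (\<lambda>x. L (\<lambda>_. x))"
    unfolding homogeneous_poly_def using \<open>multilinear_form sc n L\<close> \<open>symmetric_form n L\<close> by blast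
  then show "(\<lambda>x. \<Sum>S\<in>t. c S * symmetrized_form u n (f S) (\<lambda>_. x))
      \<in> {P. homogeneous_poly sc n P \<and> poly_deg_le sc n P \<and> unbounded_fun P} - {0}"
    using unbounded_diagonal unbounded_fun_nonzero[OF unbounded_diagonal]
      homogeneous_poly_imp_poly_deg_le[OF vs]
    by (simp add: combination[symmetric])
qed

lemma thm33_concl_if_infinite_basis:
  fixes sc :: "'k::real_normed_field \<Rightarrow> 'a::real_normed_vector \<Rightarrow> 'a"
  assumes n: "n \<ge> 1" and ns: "normed_space_over sc" and B: "hamel_basis sc B" "infinite B"
  shows "thm33_concl sc n B"
proof -
  have vs: "Vector_Spaces.vector_space sc" using ns by (simp add: normed_space_over_def)
  obtain u f where u: "Vector_Spaces.linear sc (*) u" and f: "\<And>S. Vector_Spaces.linear sc (*) (f S)"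
    and unbounded: "unbounded_combinations u f (Pow B)"
    using exists_unbounded_combinations[OF ns _ B(2)] B(1) unfolding hamel_basis_def by blast
  note nontrivial = nontrivial_symmetrized_combination[OF vs u f unbounded n]
  have forms: "lineable_card (Pow B) {L. multilinear_form sc n L \<and> symmetric_form n L \<and> unbounded_form n L}"
    by (rule lineable_cardI[where \<Phi> = "\<lambda>S. symmetrized_form u n (f S)"]) (rule nontrivial(1))
  have polys: "lineable_card (Pow B) {P. homogeneous_poly sc n P \<and> poly_deg_le sc n P \<and> unbounded_fun P}"
    by (rule lineable_cardI[where \<Phi> = "\<lambda>S x. symmetrized_form u n (f S) (\<lambda>_. x)"]) (rule nontrivial(2))
  show ?thesis
    unfolding thm33_concl_def
    by (intro conjI) (rule lineable_card_mono[OF forms] lineable_card_mono[OF polys]; blast)+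
qed

theorem theorem3p3:
  fixes n :: nat
  assumes "n \<ge> 1"
  shows "(\<forall>(sc :: real \<Rightarrow> 'a::real_normed_vector \<Rightarrow> 'a) B.
            normed_space_over sc \<and> hamel_basis sc B \<and> infinite B
            \<longrightarrow> thm33_concl sc n B)
       \<and> (\<forall>(sc :: complex \<Rightarrow> 'b::real_normed_vector \<Rightarrow> 'b) B.
            normed_space_over sc \<and> hamel_basis sc B \<and> infinite B
            \<longrightarrow> thm33_concl sc n B)"
  by (intro conjI allI impI; elim conjE; rule thm33_concl_if_infinite_basis[OF assms])

end
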